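(* Let $N\in\mathbb{N}$. For a function $f:\mathbb{R}^N\to\mathbb{R}$, $V>0$ and $p\in(0,\infty)$ define $$\|f\|_{p,V}:=\sup\Big\{\Big(\frac{1}{|\Omega|}\int_{\Omega}|f(x)|^{p}\,dx\Big)^{1/p} : \Omega\subset\mathbb{R}^N \text{ open and convex},\ |\Omega|=V\Big\},$$ and let $L^p_V:=\{f\mid \|f\|_{p,V}<\infty\}$ modulo functions vanishing almost everywhere. Let $d\in\mathbb{N}$, $\alpha_1,\dots,\alpha_d>0$ and $V=\sum_{l=1}^{d}\alpha_l$. Then for all $p\in[1,\infty)$ and all $f\in L^p_V$, $$\|f\|_{p,V}^{p}\leq\sum_{l=1}^{d}\frac{\alpha_l}{V}\|f\|_{p,\alpha_l}^{p}.$$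
   Context: $|\Omega|$ denotes the $N$-dimensional Lebesgue measure; functions are measurable; the quantities $\|f\|_{p,\alpha_l}$ take values in $[0,\infty]$. *)

theory Defs
  imports "HOL-Analysis.Analysis"
begin

definition ennreal_powr :: "ennreal \<Rightarrow> real \<Rightarrow> ennreal" where
  "ennreal_powr x q = (if x = \<infinity> then \<infinity> else ennreal (enn2real x powr q))"

definition normpV :: "('a::euclidean_space \<Rightarrow> real) \<Rightarrow> real \<Rightarrow> real \<Rightarrow> ennreal" where
  "normpV f p V =
     (SUP \<Omega> \<in> {\<Omega>. open \<Omega> \<and> convex \<Omega> \<and> emeasure lebesgue \<Omega> = ennreal V}.
        ennreal_powr (ennreal (1 / V) * (\<integral>\<^sup>+ x \<in> \<Omega>. ennreal (\<bar>f x\<bar> powr p) \<partial>lebesgue)) (1 / p))"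

end

theory Submission
  imports Defs "HOL-Probability.Distribution_Functions"
begin

text \<open>A hyperplane \<open>{x. x \<bullet> b = t}\<close> is Lebesgue-null, so the measure of the part of an
  open convex set \<open>\<Omega>\<close> below it depends continuously on \<open>t\<close>; by the intermediate value
  theorem \<open>\<Omega>\<close> can be cut into two open convex pieces of any prescribed volumes, and the
  integral over \<open>\<Omega>\<close> is the sum of the integrals over the pieces. Cutting off one piece
  after another, an open convex set of volume \<open>\<alpha>\<^sub>1 + \<dots> + \<alpha>\<^sub>d\<close> is split, up to a null set,
  into open convex pieces of volumes \<open>\<alpha>\<^sub>l\<close>, and on the piece of volume \<open>\<alpha>\<^sub>l\<close> the integral
  of \<open>\<bar>f\<bar>\<^sup>p\<close> is at most \<open>\<alpha>\<^sub>l \<parallel>f\<parallel>\<^sub>p\<^sub>,\<^sub>\<alpha>\<^sub>l\<^sup>p\<close>. Dividing by the total volume and taking the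
  supremum over \<open>\<Omega>\<close> gives the claim.\<close>

lemma null_sets_hyperplane:
  fixes b :: "'a::euclidean_space"
  assumes "b \<noteq> 0"
  shows "{x. x \<bullet> b = t} \<in> null_sets lebesgue"
proof -
  have "{x. x \<bullet> b = t} = {x. b \<bullet> x = t}" by (auto simp: inner_commute)
  then show ?thesis
    using negligible_hyperplane[of b t] assms by (simp add: negligible_iff_null_sets)
qed

lemma emeasure_hyperplane_cut:
  fixes \<Omega> :: "'a::euclidean_space set" and b :: 'a
  assumes \<Omega>: "\<Omega> \<in> sets lebesgue" and m: "emeasure lebesgue \<Omega> = ennreal (A + B)"
    and A: "A > 0" and B: "B > 0" and b: "b \<noteq> 0"
  obtains t where "emeasure lebesgue (\<Omega> \<inter> {x. x \<bullet> b < t}) = ennreal A"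
    and "emeasure lebesgue (\<Omega> \<inter> {x. x \<bullet> b > t}) = ennreal B"
proof -
  define M where "M = distr (restrict_space lebesgue \<Omega>) borel (\<lambda>x. x \<bullet> b)"
  have inner_measurable: "(\<lambda>x. x \<bullet> b) \<in> borel_measurable lebesgue"
    using continuous_imp_measurable_on_sets_lebesgue[of UNIV "\<lambda>x. x \<bullet> b"]
    by (simp add: continuous_on_inner continuous_on_id continuous_on_const)
  have slab_sets: "\<Omega> \<inter> {x. x \<bullet> b \<in> S} \<in> sets lebesgue" if "S \<in> sets borel" for S
    using lebesgue_measurable_vimage_borel[OF inner_measurable that] \<Omega> by auto
  have emeasure_M: "emeasure M S = emeasure lebesgue (\<Omega> \<inter> {x. x \<bullet> b \<in> S})"
    if S: "S \<in> sets borel" for S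
  proof -
    have "emeasure M S = emeasure (restrict_space lebesgue \<Omega>) ((\<lambda>x. x \<bullet> b) -` S \<inter> \<Omega>)"
      unfolding M_def
      using emeasure_distr[OF measurable_restrict_space1[OF inner_measurable] S]
      by (simp add: space_restrict_space)
    also have "\<dots> = emeasure lebesgue (\<Omega> \<inter> {x. x \<bullet> b \<in> S})"
      by (subst emeasure_restrict_space) (use \<Omega> in \<open>auto intro: arg_cong[where f="emeasure lebesgue"]\<close>)
    finally show ?thesis .
  qed
  have total: "emeasure M (space M) = ennreal (A + B)"
    using emeasure_M[of UNIV] m by (simp add: M_def)
  interpret finite_borel_measure M
    by (intro finite_borel_measure.intro finite_borel_measure_axioms.intro finite_measureI)
      (use total in \<open>simp_all add: M_def\<close>)
  have hyperplane_null: "\<Omega> \<inter> {x. x \<bullet> b = t} \<in> null_sets lebesgue" for t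
    using null_set_Int1[OF null_sets_hyperplane[OF b] \<Omega>] by (simp add: Int_commute)
  have "emeasure M {t} = 0" for t
    using emeasure_M[of "{t}"] hyperplane_null[of t] by (simp add: null_setsD1)
  then have cont: "isCont (cdf M) t" for t
    unfolding isCont_cdf by (simp add: measure_def)
  obtain u where u: "cdf M u < A"
  proof -
    have "\<forall>\<^sub>F x in at_bot. cdf M x < A" using cdf_lim_at_bot A by (rule order_tendstoD)
    then show ?thesis using that by (auto simp: eventually_at_bot_linorder)
  qed
  obtain v where v: "cdf M v > A"
  proof -
    have "measure M (space M) = A + B" using total A B by (simp add: measure_def)
    then have "\<forall>\<^sub>F x in at_top. cdf M x > A" using cdf_lim_at_top B
      by (intro order_tendstoD) auto
    then show ?thesis using that by (auto simp: eventually_at_top_linorder)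
  qed
  have "u \<le> v" using u v cdf_nondecreasing[of v u] by force
  then obtain t where "cdf M t = A"
    using IVT'[of "cdf M" u A v] u v cont by (auto intro: continuous_at_imp_continuous_on)
  then have closed_below: "emeasure lebesgue (\<Omega> \<inter> {x. x \<bullet> b \<in> {..t}}) = ennreal A"
    using emeasure_M[of "{..t}"] emeasure_eq_measure[of "{..t}"] unfolding cdf_def by auto
  have "\<Omega> \<inter> {x. x \<bullet> b < t} = (\<Omega> \<inter> {x. x \<bullet> b \<in> {..t}}) - (\<Omega> \<inter> {x. x \<bullet> b = t})" by auto
  then have "emeasure lebesgue (\<Omega> \<inter> {x. x \<bullet> b < t}) = ennreal A"
    using closed_below hyperplane_null slab_sets[of "{..t}"] by (simp add: emeasure_Diff_null_set)
  moreover have "\<Omega> \<inter> {x. x \<bullet> b > t} = \<Omega> - (\<Omega> \<inter> {x. x \<bullet> b \<in> {..t}})" by auto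
  then have "emeasure lebesgue (\<Omega> \<inter> {x. x \<bullet> b > t}) = ennreal B"
    using closed_below slab_sets[of "{..t}"] \<Omega> m A B by (simp add: emeasure_Diff ennreal_minus)
  ultimately show ?thesis by (rule that)
qed

lemma nn_integral_hyperplane_split:
  fixes g :: "'a::euclidean_space \<Rightarrow> ennreal"
  assumes g: "g \<in> borel_measurable lebesgue" and b: "b \<noteq> 0"
    and \<Omega>: "\<Omega> \<in> sets lebesgue"
  shows "(\<integral>\<^sup>+x\<in>\<Omega>. g x \<partial>lebesgue)
           = (\<integral>\<^sup>+x\<in>\<Omega> \<inter> {x. x \<bullet> b < t}. g x \<partial>lebesgue) + (\<integral>\<^sup>+x\<in>\<Omega> \<inter> {x. x \<bullet> b > t}. g x \<partial>lebesgue)"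
proof -
  have "open {x. x \<bullet> b < t}" "open {x. x \<bullet> b > t}"
    by (auto intro!: open_Collect_less continuous_intros)
  then have pieces: "\<Omega> \<inter> {x. x \<bullet> b < t} \<in> sets lebesgue" "\<Omega> \<inter> {x. x \<bullet> b > t} \<in> sets lebesgue"
    using \<Omega> by auto
  have "(\<integral>\<^sup>+x\<in>\<Omega>. g x \<partial>lebesgue)
      = (\<integral>\<^sup>+x. g x * indicator (\<Omega> \<inter> {x. x \<bullet> b < t}) x
                + g x * indicator (\<Omega> \<inter> {x. x \<bullet> b > t}) x \<partial>lebesgue)"
    using AE_not_in[OF null_sets_hyperplane[OF b, of t]]
    by (intro nn_integral_cong_AE) (auto elim!: eventually_mono simp: indicator_def)
  also have "\<dots> = (\<integral>\<^sup>+x\<in>\<Omega> \<inter> {x. x \<bullet> b < t}. g x \<partial>lebesgue)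
                  + (\<integral>\<^sup>+x\<in>\<Omega> \<inter> {x. x \<bullet> b > t}. g x \<partial>lebesgue)"
    using g pieces by (intro nn_integral_add) auto
  finally show ?thesis .
qed

lemma open_convex_hyperplane_pieces:
  fixes b :: "'a::real_inner"
  assumes "open \<Omega>" "convex \<Omega>"
  shows "open (\<Omega> \<inter> {x. x \<bullet> b < t})" "convex (\<Omega> \<inter> {x. x \<bullet> b < t})"
    and "open (\<Omega> \<inter> {x. x \<bullet> b > t})" "convex (\<Omega> \<inter> {x. x \<bullet> b > t})"
proof -
  have "{x. x \<bullet> b < t} = {x. b \<bullet> x < t}" "{x. x \<bullet> b > t} = {x. b \<bullet> x > t}"
    by (auto simp: inner_commute)
  then show "open (\<Omega> \<inter> {x. x \<bullet> b < t})" "convex (\<Omega> \<inter> {x. x \<bullet> b < t})"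
    and "open (\<Omega> \<inter> {x. x \<bullet> b > t})" "convex (\<Omega> \<inter> {x. x \<bullet> b > t})"
    using assms by (auto intro!: open_Int convex_Int open_halfspace_lt convex_halfspace_lt
        open_halfspace_gt convex_halfspace_gt)
qed

lemma nn_integral_open_convex_le_sum:
  fixes g :: "'a::euclidean_space \<Rightarrow> ennreal" and Q :: "real \<Rightarrow> ennreal"
  assumes g: "g \<in> borel_measurable lebesgue"
    and Q: "\<And>c \<Omega>. c > 0 \<Longrightarrow> open \<Omega> \<Longrightarrow> convex \<Omega> \<Longrightarrow> emeasure lebesgue \<Omega> = ennreal c
              \<Longrightarrow> (\<integral>\<^sup>+x\<in>\<Omega>. g x \<partial>lebesgue) \<le> ennreal c * Q c"
    and L: "finite L" "L \<noteq> {}" and \<alpha>: "\<forall>l\<in>L. \<alpha> l > 0"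
    and "open \<Omega>" "convex \<Omega>" "emeasure lebesgue \<Omega> = ennreal (\<Sum>l\<in>L. \<alpha> l)"
  shows "(\<integral>\<^sup>+x\<in>\<Omega>. g x \<partial>lebesgue) \<le> (\<Sum>l\<in>L. ennreal (\<alpha> l) * Q (\<alpha> l))"
  using L \<alpha> assms(6-)
proof (induction L arbitrary: \<Omega> rule: finite_ne_induct)
  case (singleton l)
  then show ?case using Q[of "\<alpha> l" \<Omega>] by simp
next
  case (insert l L)
  obtain b :: 'a where b: "b \<noteq> 0" using nonzero_Basis nonempty_Basis by blast
  have \<alpha>L: "\<forall>k\<in>L. \<alpha> k > 0" and \<alpha>l: "\<alpha> l > 0" using insert.prems(1) by auto
  have "(\<Sum>k\<in>L. \<alpha> k) > 0" using \<alpha>L insert.hyps(1,2) by (intro sum_pos) auto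
  moreover have "emeasure lebesgue \<Omega> = ennreal ((\<Sum>k\<in>L. \<alpha> k) + \<alpha> l)"
    using insert.prems(4) insert.hyps(1,3) by (simp add: add.commute)
  moreover have "\<Omega> \<in> sets lebesgue" using insert.prems(2) by simp
  ultimately obtain t
    where below: "emeasure lebesgue (\<Omega> \<inter> {x. x \<bullet> b < t}) = ennreal (\<Sum>k\<in>L. \<alpha> k)"
      and above: "emeasure lebesgue (\<Omega> \<inter> {x. x \<bullet> b > t}) = ennreal (\<alpha> l)"
    using emeasure_hyperplane_cut[OF _ _ _ \<alpha>l b] by blast
  note pieces = open_convex_hyperplane_pieces[OF insert.prems(2,3), where b=b and t=t]
  have "(\<integral>\<^sup>+x\<in>\<Omega>. g x \<partial>lebesgue)
      = (\<integral>\<^sup>+x\<in>\<Omega> \<inter> {x. x \<bullet> b < t}. g x \<partial>lebesgue) + (\<integral>\<^sup>+x\<in>\<Omega> \<inter> {x. x \<bullet> b > t}. g x \<partial>lebesgue)"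
    using insert.prems(2) by (intro nn_integral_hyperplane_split[OF g b]) simp
  also have "\<dots> \<le> (\<Sum>k\<in>L. ennreal (\<alpha> k) * Q (\<alpha> k)) + ennreal (\<alpha> l) * Q (\<alpha> l)"
    using insert.IH[OF \<alpha>L pieces(1,2) below] Q[OF \<alpha>l pieces(3,4) above] by (rule add_mono)
  also have "\<dots> = (\<Sum>k\<in>insert l L. ennreal (\<alpha> k) * Q (\<alpha> k))"
    using insert.hyps(1,3) by (simp add: add.commute)
  finally show ?case .
qed

lemma powr_le_iff_le_powr_inverse:
  fixes r s q :: real
  assumes "q > 0" "r \<ge> 0" "s \<ge> 0"
  shows "r powr q \<le> s \<longleftrightarrow> r \<le> s powr (1 / q)"
proof
  assume "r powr q \<le> s"
  then have "(r powr q) powr (1 / q) \<le> s powr (1 / q)"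
    using assms by (intro powr_mono2) auto
  then show "r \<le> s powr (1 / q)" using assms by (simp add: powr_powr)
next
  assume "r \<le> s powr (1 / q)"
  then have "r powr q \<le> (s powr (1 / q)) powr q"
    using assms by (intro powr_mono2) auto
  then show "r powr q \<le> s" using assms by (simp add: powr_powr)
qed

lemma ennreal_powr_le_iff_le_ennreal_powr_inverse:
  assumes "q > 0"
  shows "ennreal_powr x q \<le> y \<longleftrightarrow> x \<le> ennreal_powr y (1 / q)"
proof (cases "x = \<infinity> \<or> y = \<infinity>")
  case True
  then show ?thesis by (auto simp: ennreal_powr_def top_unique)
next
  case False
  then obtain r s where "x = ennreal r" "r \<ge> 0" "y = ennreal s" "s \<ge> 0"
    by (cases x; cases y) auto
  then show ?thesis
    using assms by (simp add: ennreal_powr_def powr_le_iff_le_powr_inverse)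
qed

lemma ennreal_powr_mono:
  assumes "x \<le> y" "q > 0"
  shows "ennreal_powr x q \<le> ennreal_powr y q"
proof (cases "y = \<infinity>")
  case False
  with assms(1) obtain r s where "x = ennreal r" "r \<ge> 0" "y = ennreal s" "r \<le> s"
    by (cases x; cases y) (auto simp: top_unique)
  then show ?thesis using assms(2) by (simp add: ennreal_powr_def powr_mono2)
qed (simp add: ennreal_powr_def)

lemma nn_integral_powr_le_normpV:
  fixes f :: "'a::euclidean_space \<Rightarrow> real"
  assumes "p > 0" "c > 0" "open \<Omega>" "convex \<Omega>" "emeasure lebesgue \<Omega> = ennreal c"
  shows "(\<integral>\<^sup>+x\<in>\<Omega>. ennreal (\<bar>f x\<bar> powr p) \<partial>lebesgue) \<le> ennreal c * ennreal_powr (normpV f p c) p"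
proof -
  let ?I = "\<integral>\<^sup>+x\<in>\<Omega>. ennreal (\<bar>f x\<bar> powr p) \<partial>lebesgue"
  have "ennreal_powr (ennreal (1 / c) * ?I) (1 / p) \<le> normpV f p c"
    unfolding normpV_def using assms by (intro SUP_upper) auto
  then have "ennreal (1 / c) * ?I \<le> ennreal_powr (normpV f p c) p"
    using assms(1) by (simp add: ennreal_powr_le_iff_le_ennreal_powr_inverse)
  then have "ennreal c * (ennreal (1 / c) * ?I) \<le> ennreal c * ennreal_powr (normpV f p c) p"
    by (rule mult_left_mono) simp
  then show ?thesis
    using assms(2) by (simp add: mult.assoc[symmetric] ennreal_mult[symmetric])
qed

theorem lemma2p2:
  fixes f :: "'a::euclidean_space \<Rightarrow> real"
    and d :: nat and \<alpha> :: "nat \<Rightarrow> real" and V p :: real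
  assumes "d \<ge> 1"
    and "\<forall>l \<in> {1..d}. \<alpha> l > 0"
    and "V = (\<Sum>l = 1..d. \<alpha> l)"
    and "1 \<le> p"
    and "f \<in> borel_measurable lebesgue"
    and "normpV f p V < \<infinity>"
  shows "ennreal_powr (normpV f p V) p
           \<le> (\<Sum>l = 1..d. ennreal (\<alpha> l / V) * ennreal_powr (normpV f p (\<alpha> l)) p)"
proof -
  have p: "p > 0" and V: "V > 0"
    using assms(1-4) by (auto intro!: sum_pos)
  have g: "(\<lambda>x. ennreal (\<bar>f x\<bar> powr p)) \<in> borel_measurable lebesgue"
    using assms(5) by measurable
  let ?R = "\<Sum>l = 1..d. ennreal (\<alpha> l / V) * ennreal_powr (normpV f p (\<alpha> l)) p"
  have "ennreal (1 / V) * (\<integral>\<^sup>+x\<in>\<Omega>. ennreal (\<bar>f x\<bar> powr p) \<partial>lebesgue) \<le> ?R"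
    if "open \<Omega>" "convex \<Omega>" "emeasure lebesgue \<Omega> = ennreal V" for \<Omega>
  proof -
    have "(\<integral>\<^sup>+x\<in>\<Omega>. ennreal (\<bar>f x\<bar> powr p) \<partial>lebesgue)
        \<le> (\<Sum>l = 1..d. ennreal (\<alpha> l) * ennreal_powr (normpV f p (\<alpha> l)) p)"
      using assms(1-3) that
      by (intro nn_integral_open_convex_le_sum[OF g nn_integral_powr_le_normpV[OF p]]) auto
    then have "ennreal (1 / V) * (\<integral>\<^sup>+x\<in>\<Omega>. ennreal (\<bar>f x\<bar> powr p) \<partial>lebesgue)
        \<le> (\<Sum>l = 1..d. ennreal (1 / V) * (ennreal (\<alpha> l) * ennreal_powr (normpV f p (\<alpha> l)) p))"
      unfolding sum_distrib_left[symmetric] by (rule mult_left_mono) simp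
    also have "\<dots> = ?R"
      using V by (simp add: mult.assoc[symmetric] ennreal_mult'[symmetric])
    finally show ?thesis .
  qed
  then have "normpV f p V \<le> ennreal_powr ?R (1 / p)"
    unfolding normpV_def using p
    by (intro SUP_least ennreal_powr_mono) auto
  then show ?thesis
    using p by (simp add: ennreal_powr_le_iff_le_ennreal_powr_inverse)
qed

end
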